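(* Let $(\varpi,\nu)$ be sub-consistent, where $\varpi$ is a finite measure on $\mathcal X\times\mathcal X$ and $\nu$ a probability measure on $\mathcal X\times\mathcal X^*$ with $\int n\,d\nu<\infty$. Then there exists a sequence $(\hat\varpi_n,\hat\nu_n)\in\mathcal M_s$ such that (i) each $(\hat\varpi_n,\hat\nu_n)$ is consistent, and (ii) $(\hat\varpi_n,\hat\nu_n)\to(\varpi,\nu)$ as $n\to\infty$.
   Context: $\mathcal X$ is a finite alphabet, $\mathcal X^*=\bigcup_{n\ge0}\{n\}\times\mathcal X^n$ with elements $c=(n,a_1,\dots,a_n)$, $m(a,c)=\sum_i\mathbf 1\{a_i=a\}$. $(\varpi,\nu)$ is sub-consistent if $\varpi(a,b)\ge\sum_{c\in\mathcal X^*}m(b,c)\nu(a,c)$ for all $a,b\in\mathcal X$, consistent if equality holds for all $a,b$. $\mathcal M_s$ is the set of sub-consistent pairs in (finite measures on $\mathcal X\times\mathcal X$) $\times$ (probability measures $\nu$ on $\mathcal X\times\mathcal X^*$ with $\int n\,d\nu<\infty$), with the weak topology; convergence is in this topology. *)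

theory Defs
  imports "HOL-Probability.Probability"
begin

text \<open>The alphabet X is a finite type 'a. An element c = (n, a_1, ..., a_n) of X^* is
represented by the list [a_1, ..., a_n] (so n = length c), and m(a,c) = count_list c a.
A finite measure on the finite set X x X is given by its nonnegative point masses
varpi :: 'a x 'a => real. A probability measure on the countable discrete space
X x X^* is a pmf.\<close>

definition mult :: "'a \<Rightarrow> 'a list \<Rightarrow> real" where
  "mult a c = real (count_list c a)"

definition finite_meas :: "('a \<times> 'a \<Rightarrow> real) \<Rightarrow> bool" where
  "finite_meas w \<longleftrightarrow> (\<forall>x. 0 \<le> w x)"

definition finite_mean :: "('a \<times> 'a list) pmf \<Rightarrow> bool" where
  "finite_mean \<nu> \<longleftrightarrow> integrable (measure_pmf \<nu>) (\<lambda>(a, c). real (length c))"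

text \<open>sum over c of m(b,c) nu(a,c), written as an integral against nu\<close>
definition flow :: "('a \<times> 'a list) pmf \<Rightarrow> 'a \<Rightarrow> 'a \<Rightarrow> real" where
  "flow \<nu> a b = measure_pmf.expectation \<nu> (\<lambda>(a', c). if a' = a then mult b c else 0)"

definition sub_consistent :: "('a \<times> 'a \<Rightarrow> real) \<Rightarrow> ('a \<times> 'a list) pmf \<Rightarrow> bool" where
  "sub_consistent w \<nu> \<longleftrightarrow> (\<forall>a b. w (a, b) \<ge> flow \<nu> a b)"

definition consistent :: "('a \<times> 'a \<Rightarrow> real) \<Rightarrow> ('a \<times> 'a list) pmf \<Rightarrow> bool" where
  "consistent w \<nu> \<longleftrightarrow> (\<forall>a b. w (a, b) = flow \<nu> a b)"

definition in_Ms :: "('a \<times> 'a \<Rightarrow> real) \<Rightarrow> ('a \<times> 'a list) pmf \<Rightarrow> bool" where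
  "in_Ms w \<nu> \<longleftrightarrow> finite_meas w \<and> finite_mean \<nu> \<and> sub_consistent w \<nu>"

text \<open>Weak convergence. On the finite discrete space X x X this is convergence of all
point masses; on the discrete space X x X^* every bounded function is continuous.\<close>
definition weak_conv_meas :: "(nat \<Rightarrow> 'a \<times> 'a \<Rightarrow> real) \<Rightarrow> ('a \<times> 'a \<Rightarrow> real) \<Rightarrow> bool" where
  "weak_conv_meas ws w \<longleftrightarrow> (\<forall>x. (\<lambda>k. ws k x) \<longlonglongrightarrow> w x)"

definition weak_conv_pmf :: "(nat \<Rightarrow> 'b pmf) \<Rightarrow> 'b pmf \<Rightarrow> bool" where
  "weak_conv_pmf \<nu>s \<nu> \<longleftrightarrow>
     (\<forall>f :: 'b \<Rightarrow> real. bounded (range f) \<longrightarrow>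
        (\<lambda>k. measure_pmf.expectation (\<nu>s k) f) \<longlonglongrightarrow> measure_pmf.expectation \<nu> f)"

end

theory Submission
  imports Defs
begin

text \<open>Write the defect of a sub-consistent pair as d(a,b) = w(a,b) - flow \<nu> a b \<ge> 0. Mix \<nu> with a
small weight e of a finitely supported \<mu> that picks the root a uniformly and gives it a child
list with about |X| d(a,b) / e copies of each b: the flow of the mixture then differs from w by
O(e), and the mixture itself converges weakly to \<nu> as e \<rightarrow> 0. Taking the measure to be exactly
the flow of the mixture makes each approximating pair consistent.\<close>

definition mix_pmf :: "real \<Rightarrow> 'b pmf \<Rightarrow> 'b pmf \<Rightarrow> 'b pmf" where
  "mix_pmf e p q = bind_pmf (bernoulli_pmf e) (\<lambda>b. if b then p else q)"

lemma pmf_mix_pmf: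
  "0 \<le> e \<Longrightarrow> e \<le> 1 \<Longrightarrow> pmf (mix_pmf e p q) x = e * pmf p x + (1 - e) * pmf q x"
  unfolding mix_pmf_def pmf_bind by simp

lemma
  fixes f :: "'b \<Rightarrow> real"
  assumes e: "0 \<le> e" "e \<le> 1"
    and "integrable (measure_pmf p) f" "integrable (measure_pmf q) f"
  shows integrable_mix_pmf: "integrable (measure_pmf (mix_pmf e p q)) f"
    and integral_mix_pmf: "measure_pmf.expectation (mix_pmf e p q) f
           = e * measure_pmf.expectation p f + (1 - e) * measure_pmf.expectation q f"
proof -
  have weighted: "(\<lambda>x. pmf (mix_pmf e p q) x * f x)
      = (\<lambda>x. e * (pmf p x * f x) + (1 - e) * (pmf q x * f x))"
    using e by (auto simp: pmf_mix_pmf algebra_simps)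
  have "integrable (count_space UNIV) (\<lambda>x. pmf r x * f x)"
    if "integrable (measure_pmf r) f" for r :: "'b pmf"
    using that unfolding measure_pmf_eq_density by (subst (asm) integrable_density) auto
  note integrable_weighted = this[OF assms(3)] this[OF assms(4)]
  have expectation_weighted: "measure_pmf.expectation r f
      = integral\<^sup>L (count_space UNIV) (\<lambda>x. pmf r x * f x)" for r :: "'b pmf"
    unfolding measure_pmf_eq_density by (subst integral_density) auto
  show "integrable (measure_pmf (mix_pmf e p q)) f"
    unfolding measure_pmf_eq_density
    by (subst integrable_density) (use integrable_weighted weighted in auto)
  show "measure_pmf.expectation (mix_pmf e p q) f
      = e * measure_pmf.expectation p f + (1 - e) * measure_pmf.expectation q f"
    unfolding expectation_weighted weighted using integrable_weighted by simp
qed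

lemma abs_expectation_le:
  fixes f :: "'b \<Rightarrow> real"
  assumes "\<And>x. \<bar>f x\<bar> \<le> B"
  shows "\<bar>measure_pmf.expectation p f\<bar> \<le> B"
proof -
  have integrable: "integrable (measure_pmf p) f"
    using assms by (intro measure_pmf.integrable_const_bound[where B = B]) auto
  have "measure_pmf.expectation p f \<le> B"
    using assms abs_le_D1 by (intro measure_pmf.integral_le_const[OF integrable]) auto
  moreover have "- B \<le> measure_pmf.expectation p f"
    using assms by (intro measure_pmf.integral_ge_const[OF integrable] AE_I2)
      (metis abs_le_iff minus_le_iff)
  ultimately show ?thesis by auto
qed

lemma weak_conv_pmf_mix_pmf:
  fixes \<nu> :: "'b pmf"
  assumes "\<And>k. 0 \<le> e k" "\<And>k. e k \<le> 1" "e \<longlonglongrightarrow> 0"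
  shows "weak_conv_pmf (\<lambda>k. mix_pmf (e k) (\<mu> k) \<nu>) \<nu>"
  unfolding weak_conv_pmf_def
proof (intro allI impI)
  fix f :: "'b \<Rightarrow> real"
  assume "bounded (range f)"
  then obtain B where B: "\<And>x. \<bar>f x\<bar> \<le> B"
    by (metis bounded_real rangeI)
  have integrable: "integrable (measure_pmf p) f" for p
    using B by (intro measure_pmf.integrable_const_bound[where B = B]) auto
  have bound: "norm (measure_pmf.expectation (mix_pmf (e k) (\<mu> k) \<nu>) f - measure_pmf.expectation \<nu> f)
        \<le> 2 * B * e k" for k
  proof -
    have "measure_pmf.expectation (mix_pmf (e k) (\<mu> k) \<nu>) f - measure_pmf.expectation \<nu> f
        = e k * (measure_pmf.expectation (\<mu> k) f - measure_pmf.expectation \<nu> f)"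
      using assms(1,2)[of k] by (simp add: integral_mix_pmf integrable algebra_simps)
    then have "norm (measure_pmf.expectation (mix_pmf (e k) (\<mu> k) \<nu>) f - measure_pmf.expectation \<nu> f)
        = e k * \<bar>measure_pmf.expectation (\<mu> k) f - measure_pmf.expectation \<nu> f\<bar>"
      using assms(1)[of k] by (simp add: abs_mult)
    also have "\<dots> \<le> e k * (2 * B)"
      using abs_expectation_le[where f = f, OF B, of "\<mu> k"] abs_expectation_le[where f = f, OF B, of \<nu>]
      by (intro mult_left_mono assms(1)) linarith
    finally show ?thesis
      by (simp add: mult_ac)
  qed
  have "(\<lambda>k. 2 * B * e k) \<longlonglongrightarrow> 0"
    using tendsto_mult_right_zero[OF assms(3)] .
  then have "(\<lambda>k. measure_pmf.expectation (mix_pmf (e k) (\<mu> k) \<nu>) f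
                      - measure_pmf.expectation \<nu> f) \<longlonglongrightarrow> 0"
    by (rule Lim_null_comparison[OF always_eventually[OF allI[OF bound]]])
  then show "(\<lambda>k. measure_pmf.expectation (mix_pmf (e k) (\<mu> k) \<nu>) f)
               \<longlonglongrightarrow> measure_pmf.expectation \<nu> f"
    by (rule Lim_null[THEN iffD2])
qed

lemma ex_list_with_counts:
  fixes N :: "'a::finite \<Rightarrow> nat"
  shows "\<exists>c. \<forall>b. count_list c b = N b"
proof -
  obtain c where "mset c = Abs_multiset N"
    using ex_mset by blast
  then show ?thesis
    by (metis count_Abs_multiset count_mset finite)
qed

lemma nat_floor_approx:
  fixes x e :: real
  assumes "0 \<le> x" "0 < e"
  shows "\<bar>e * real (nat \<lfloor>x / e\<rfloor>) - x\<bar> \<le> e"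
proof -
  define m where "m = real (nat \<lfloor>x / e\<rfloor>)"
  have "0 \<le> x / e"
    using assms by simp
  then have "m \<le> x / e" "x / e - 1 < m"
    unfolding m_def by linarith+
  then have "e * m \<le> x" "x - e < e * m"
    using assms(2) by (simp_all add: field_simps)
  then show ?thesis
    unfolding m_def by linarith
qed

lemma integrable_flow_integrand:
  assumes "finite_mean \<nu>"
  shows "integrable (measure_pmf \<nu>) (\<lambda>(a', c). if a' = a then mult b c else 0)"
  using assms unfolding finite_mean_def
  by (rule Bochner_Integration.integrable_bound)
    (auto intro!: AE_I2 simp: mult_def count_le_length)

lemma flow_nonneg: "0 \<le> flow \<nu> a b"
  unfolding flow_def by (rule integral_nonneg_AE) (auto simp: mult_def)

lemma finite_mean_finite_support: "finite (set_pmf \<nu>) \<Longrightarrow> finite_mean \<nu>"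
  unfolding finite_mean_def by (rule integrable_measure_pmf_finite)

lemma finite_mean_mix_pmf:
  "0 \<le> e \<Longrightarrow> e \<le> 1 \<Longrightarrow> finite_mean \<mu> \<Longrightarrow> finite_mean \<nu> \<Longrightarrow> finite_mean (mix_pmf e \<mu> \<nu>)"
  unfolding finite_mean_def by (rule integrable_mix_pmf)

lemma flow_mix_pmf:
  assumes "0 \<le> e" "e \<le> 1" "finite_mean \<mu>" "finite_mean \<nu>"
  shows "flow (mix_pmf e \<mu> \<nu>) a b = e * flow \<mu> a b + (1 - e) * flow \<nu> a b"
  unfolding flow_def using assms by (intro integral_mix_pmf integrable_flow_integrand)

lemma flow_uniform_root:
  fixes c :: "'a::finite \<Rightarrow> 'a list"
  shows "flow (map_pmf (\<lambda>a. (a, c a)) (pmf_of_set UNIV)) a b = mult b (c a) / real CARD('a)"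
  unfolding flow_def by (simp add: integral_pmf_of_set)

lemma sub_consistent_approx_by_mix_pmf:
  fixes w :: "'a::finite \<times> 'a \<Rightarrow> real" and \<nu> :: "('a \<times> 'a list) pmf"
  assumes "finite_mean \<nu>" "sub_consistent w \<nu>" "0 < e" "e \<le> 1"
  obtains \<mu> where "finite_mean \<mu>"
    "\<And>a b. \<bar>flow (mix_pmf e \<mu> \<nu>) a b - w (a, b)\<bar> \<le> e * (1 + \<bar>flow \<nu> a b\<bar>)"
proof -
  define n where "n = real CARD('a)"
  have n: "1 \<le> n"
    unfolding n_def by (simp add: Suc_leI)
  define d where "d a b = w (a, b) - flow \<nu> a b" for a b
  have d: "0 \<le> d a b" for a b
    using assms(2) unfolding sub_consistent_def d_def by auto
  define N where "N a b = nat \<lfloor>n * d a b / e\<rfloor>" for a b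
  obtain c where c: "\<And>a b. count_list (c a) b = N a b"
    using ex_list_with_counts[of "N _"] by metis
  define \<mu> where "\<mu> = map_pmf (\<lambda>a. (a, c a)) (pmf_of_set (UNIV :: 'a set))"
  have \<mu>: "finite_mean \<mu>"
    unfolding \<mu>_def by (intro finite_mean_finite_support) simp
  have "\<bar>flow (mix_pmf e \<mu> \<nu>) a b - w (a, b)\<bar> \<le> e * (1 + \<bar>flow \<nu> a b\<bar>)" for a b
  proof -
    have "\<bar>e * real (N a b) - n * d a b\<bar> \<le> e"
      unfolding N_def using nat_floor_approx[of "n * d a b" e] d n assms(3) by simp
    moreover have "e \<le> e * n"
      using n assms(3) by simp
    ultimately have approx: "\<bar>e * real (N a b) / n - d a b\<bar> \<le> e"
      using n by (simp add: field_simps abs_le_iff)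
    have "flow (mix_pmf e \<mu> \<nu>) a b - w (a, b) = (e * real (N a b) / n - d a b) - e * flow \<nu> a b"
      using assms \<mu> by (simp add: flow_mix_pmf \<mu>_def flow_uniform_root mult_def c d_def n_def algebra_simps)
    then have "\<bar>flow (mix_pmf e \<mu> \<nu>) a b - w (a, b)\<bar> \<le> \<bar>e * real (N a b) / n - d a b\<bar> + \<bar>e * flow \<nu> a b\<bar>"
      by (simp only: abs_triangle_ineq4)
    also have "\<dots> \<le> e + e * \<bar>flow \<nu> a b\<bar>"
      using approx assms(3) by (simp add: abs_mult)
    finally show ?thesis
      by (simp add: algebra_simps)
  qed
  with \<mu> show ?thesis
    using that by blast
qed

lemma in_Ms_consistent_flow:
  assumes "finite_mean \<nu>"
  shows "in_Ms (\<lambda>(a, b). flow \<nu> a b) \<nu> \<and> consistent (\<lambda>(a, b). flow \<nu> a b) \<nu>"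
  using assms
  unfolding in_Ms_def finite_meas_def sub_consistent_def consistent_def
  by (simp add: flow_nonneg)

lemma weak_conv_meas_flow_mix_pmf:
  fixes w :: "'a::finite \<times> 'a \<Rightarrow> real" and \<nu> :: "('a \<times> 'a list) pmf"
  assumes "finite_mean \<nu>" "sub_consistent w \<nu>"
    and e: "\<And>k. 0 < e k" "\<And>k. e k \<le> 1" "e \<longlonglongrightarrow> 0"
  shows "\<exists>\<mu>. (\<forall>k. finite_mean (\<mu> k))
           \<and> weak_conv_meas (\<lambda>k (a, b). flow (mix_pmf (e k) (\<mu> k) \<nu>) a b) w"
proof -
  have "\<forall>k. \<exists>\<mu>. finite_mean \<mu> \<and>
      (\<forall>a b. \<bar>flow (mix_pmf (e k) \<mu> \<nu>) a b - w (a, b)\<bar> \<le> e k * (1 + \<bar>flow \<nu> a b\<bar>))"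
  proof
    show "\<exists>\<mu>. finite_mean \<mu> \<and>
      (\<forall>a b. \<bar>flow (mix_pmf (e k) \<mu> \<nu>) a b - w (a, b)\<bar> \<le> e k * (1 + \<bar>flow \<nu> a b\<bar>))" for k
      by (rule sub_consistent_approx_by_mix_pmf[OF assms(1,2) e(1,2)[of k]]) blast
  qed
  then obtain \<mu> where \<mu>: "\<And>k. finite_mean (\<mu> k)"
    "\<And>k a b. \<bar>flow (mix_pmf (e k) (\<mu> k) \<nu>) a b - w (a, b)\<bar> \<le> e k * (1 + \<bar>flow \<nu> a b\<bar>)"
    by (auto dest!: choice)
  have "(\<lambda>k. flow (mix_pmf (e k) (\<mu> k) \<nu>) a b) \<longlonglongrightarrow> w (a, b)" for a b
  proof -
    have bound: "norm (flow (mix_pmf (e k) (\<mu> k) \<nu>) a b - w (a, b)) \<le> e k * (1 + \<bar>flow \<nu> a b\<bar>)" for k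
      using \<mu>(2) by simp
    have "(\<lambda>k. e k * (1 + \<bar>flow \<nu> a b\<bar>)) \<longlonglongrightarrow> 0"
      using e(3) by (rule tendsto_mult_left_zero)
    then have "(\<lambda>k. flow (mix_pmf (e k) (\<mu> k) \<nu>) a b - w (a, b)) \<longlonglongrightarrow> 0"
      by (rule Lim_null_comparison[OF always_eventually[OF allI[OF bound]]])
    then show ?thesis
      by (rule Lim_null[THEN iffD2])
  qed
  then show ?thesis
    using \<mu>(1) unfolding weak_conv_meas_def by (intro exI[of _ \<mu>]) auto
qed

theorem lemma3p7:
  fixes w :: "'a::finite \<times> 'a \<Rightarrow> real" and \<nu> :: "('a \<times> 'a list) pmf"
  assumes "in_Ms w \<nu>"
  shows "\<exists>ws \<nu>s. (\<forall>k. in_Ms (ws k) (\<nu>s k) \<and> consistent (ws k) (\<nu>s k))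
                 \<and> weak_conv_meas ws w \<and> weak_conv_pmf \<nu>s \<nu>"
proof -
  have \<nu>: "finite_mean \<nu>" "sub_consistent w \<nu>"
    using assms unfolding in_Ms_def by auto
  define e where "e k = inverse (real (Suc k))" for k
  have e: "0 < e k" "e k \<le> 1" "e \<longlonglongrightarrow> 0" for k
    unfolding e_def using LIMSEQ_inverse_real_of_nat by (auto simp: field_simps)
  obtain \<mu> where \<mu>: "\<forall>k. finite_mean (\<mu> k)"
    and conv: "weak_conv_meas (\<lambda>k (a, b). flow (mix_pmf (e k) (\<mu> k) \<nu>) a b) w"
    using weak_conv_meas_flow_mix_pmf[OF \<nu> e] by (elim exE conjE)
  have "finite_mean (mix_pmf (e k) (\<mu> k) \<nu>)" for k
    using e(1,2) \<mu> \<nu>(1) by (intro finite_mean_mix_pmf) (auto simp: less_imp_le)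
  then have "in_Ms (\<lambda>(a, b). flow (mix_pmf (e k) (\<mu> k) \<nu>) a b) (mix_pmf (e k) (\<mu> k) \<nu>)
      \<and> consistent (\<lambda>(a, b). flow (mix_pmf (e k) (\<mu> k) \<nu>) a b) (mix_pmf (e k) (\<mu> k) \<nu>)" for k
    by (rule in_Ms_consistent_flow)
  moreover have "weak_conv_pmf (\<lambda>k. mix_pmf (e k) (\<mu> k) \<nu>) \<nu>"
    using e by (intro weak_conv_pmf_mix_pmf) (auto simp: less_imp_le)
  ultimately show ?thesis
    using conv by (intro exI[of _ "\<lambda>k (a, b). flow (mix_pmf (e k) (\<mu> k) \<nu>) a b"]
      exI[of _ "\<lambda>k. mix_pmf (e k) (\<mu> k) \<nu>"]) simp
qed

end
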